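(* Let $E$ be a finite-dimensional real Euclidean space with translation space $V$, and let $\Phi_{\mathrm{aff}}$ be an affine root system on $E$ with a chosen chamber $C$ and corresponding basis $B$. Let $J\subset B$ be such that $DJ=\{Da\mid a\in J\}$ is linearly independent. Then there exists a basis $B_J$ of the affine root system $(\Phi_{\mathrm{aff}})_J$ on $E_J$ with $J\subset B_J$.
   Context: Affine root systems are in the sense of Macdonald: a set of affine-linear functions on $E$. For an affine root $a$, $Da\in V^*$ is its gradient: $a(x+v)=a(x)+(Da)(v)$. Set $V^J=\{v\in V\mid \alpha(v)=0\ \forall\alpha\in DJ\}$, $E_J=E/V^J$, an affine space with translation space $V/V^J$, given the inner product transported from the orthogonal complement $(V^J)^\perp$ via the isomorphism $(V^J)^\perp\to V/V^J$. Let $(\Phi_{\mathrm{aff}})_J=\{a\in\Phi_{\mathrm{aff}}\mid Da\in\mathbb R\cdot DJ\}$; its elements are constant along $V^J$ and hence are affine functions on $E_J$, and $(\Phi_{\mathrm{aff}})_J$ is an affine root system on $E_J$. *)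

theory Defs
  imports "HOL-Analysis.Analysis"
begin

text \<open>The Euclidean affine space E is modelled by a linear subspace W of a
Euclidean space 'a (an origin being chosen); its translation space is W itself.
An affine function on W is represented by a pair (g, c) with g in W, standing for
x \<mapsto> g \<bullet> x + c; the gradient Da is (the Riesz vector of) g = fst a.\<close>

definition aeval :: "'a::euclidean_space \<times> real \<Rightarrow> 'a \<Rightarrow> real" where
  "aeval a x = fst a \<bullet> x + snd a"

definition grad :: "'a::euclidean_space \<times> real \<Rightarrow> 'a" where
  "grad a = fst a"

definition ahyp :: "'a::euclidean_space set \<Rightarrow> 'a \<times> real \<Rightarrow> 'a set" where
  "ahyp W a = {x \<in> W. aeval a x = 0}"

definition arefl :: "'a::euclidean_space \<times> real \<Rightarrow> 'a \<Rightarrow> 'a" where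
  "arefl a x = x - (2 * aeval a x / (grad a \<bullet> grad a)) *\<^sub>R grad a"

text \<open>Cartan integer n(a,b) = 2<Da,Db>/<Db,Db>; note b \<circ> s_a = b - n(b,a) a.\<close>
definition cartan :: "'a::euclidean_space \<times> real \<Rightarrow> 'a \<times> real \<Rightarrow> real" where
  "cartan a b = 2 * (grad a \<bullet> grad b) / (grad b \<bullet> grad b)"

inductive_set weyl_group :: "('a::euclidean_space \<times> real) set \<Rightarrow> ('a \<Rightarrow> 'a) set"
  for S where
  weyl_id: "id \<in> weyl_group S"
| weyl_step: "w \<in> weyl_group S \<Longrightarrow> a \<in> S \<Longrightarrow> arefl a \<circ> w \<in> weyl_group S"

text \<open>Affine root system on W in the sense of Macdonald (AR1)-(AR4).\<close>
definition affine_root_system :: "'a::euclidean_space set \<Rightarrow> ('a \<times> real) set \<Rightarrow> bool" where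
  "affine_root_system W S \<longleftrightarrow>
     subspace W \<and>
     (\<forall>a\<in>S. grad a \<in> W \<and> grad a \<noteq> 0) \<and>
     span S = W \<times> (UNIV :: real set) \<and>
     (\<forall>a\<in>S. \<forall>b\<in>S. b - cartan b a *\<^sub>R a \<in> S) \<and>
     (\<forall>a\<in>S. \<forall>b\<in>S. cartan a b \<in> \<int>) \<and>
     (\<forall>K. compact K \<and> K \<subseteq> W \<longrightarrow> finite {w \<in> weyl_group S. w ` K \<inter> K \<noteq> {}})"

definition hyp_complement :: "'a::euclidean_space set \<Rightarrow> ('a \<times> real) set \<Rightarrow> 'a set" where
  "hyp_complement W S = W - (\<Union>a\<in>S. ahyp W a)"

definition chamber :: "'a::euclidean_space set \<Rightarrow> ('a \<times> real) set \<Rightarrow> 'a set \<Rightarrow> bool" where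
  "chamber W S C \<longleftrightarrow>
     (\<exists>x\<in>hyp_complement W S. C = connected_component_set (hyp_complement W S) x)"

definition is_wall :: "'a::euclidean_space set \<Rightarrow> 'a set \<Rightarrow> bool" where
  "is_wall H C \<longleftrightarrow> H \<inter> C = {} \<and> (\<exists>x\<in>H. \<exists>e>0. ball x e \<inter> H \<subseteq> closure C)"

definition chamber_basis :: "'a::euclidean_space set \<Rightarrow> ('a \<times> real) set \<Rightarrow> 'a set \<Rightarrow> ('a \<times> real) set" where
  "chamber_basis W S C =
     {a \<in> S. (1/2) *\<^sub>R a \<notin> S \<and> (\<forall>x\<in>C. aeval a x > 0) \<and> is_wall (ahyp W a) C}"

definition is_basis_ars :: "'a::euclidean_space set \<Rightarrow> ('a \<times> real) set \<Rightarrow> ('a \<times> real) set \<Rightarrow> bool" where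
  "is_basis_ars W S B \<longleftrightarrow> (\<exists>C. chamber W S C \<and> B = chamber_basis W S C)"

text \<open>E_J = E / V^J is identified isometrically with (V^J)^\<perp> = span DJ, and
(\<Phi>_aff)_J = {a \<in> \<Phi>_aff. Da \<in> span DJ}, restricted to it.\<close>
definition EJ :: "('a::euclidean_space \<times> real) set \<Rightarrow> 'a set" where
  "EJ J = span (grad ` J)"

definition PhiJ :: "('a::euclidean_space \<times> real) set \<Rightarrow> ('a \<times> real) set \<Rightarrow> ('a \<times> real) set" where
  "PhiJ S J = {a \<in> S. grad a \<in> span (grad ` J)}"

end

theory Submission
  imports Defs
begin

text \<open>Let P be the orthogonal projection of E onto E_J = span DJ. Every root of (\<Phi>_aff)_J is
invariant under P, so P maps the chamber C, which avoids all hyperplanes of \<Phi>_aff, into the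
complement of the hyperplanes of (\<Phi>_aff)_J in E_J, hence into a chamber C' of (\<Phi>_aff)_J.
A root a \<in> J does not vanish on C' and is positive on P ` C, so it is positive on C'. Its wall
survives as well: a point y of the hyperplane of a in E_J close to P x, where x lies on a wall
of C, is the image of the point y + (x - P x) of the hyperplane of a in E, which is equally
close to x; so y lies in P ` closure C \<subseteq> closure C'.\<close>

definition orthogonal_projection :: "'a::euclidean_space set \<Rightarrow> 'a \<Rightarrow> 'a" where
  "orthogonal_projection U x = (SOME y. y \<in> span U \<and> (\<forall>w\<in>span U. orthogonal (x - y) w))"

lemma orthogonal_projection:
  "orthogonal_projection U x \<in> span U"
  "w \<in> span U \<Longrightarrow> orthogonal (x - orthogonal_projection U x) w"
proof -
  have "\<exists>y. y \<in> span U \<and> (\<forall>w\<in>span U. orthogonal (x - y) w)"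
    by (metis orthogonal_subspace_decomp_exists add_diff_cancel_left')
  from someI_ex[OF this]
  show "orthogonal_projection U x \<in> span U"
    and "w \<in> span U \<Longrightarrow> orthogonal (x - orthogonal_projection U x) w"
    unfolding orthogonal_projection_def by blast+
qed

lemma orthogonal_projection_unique:
  assumes "y \<in> span U" and orth: "\<And>w. w \<in> span U \<Longrightarrow> orthogonal (x - y) w"
  shows "orthogonal_projection U x = y"
proof -
  let ?p = "orthogonal_projection U x"
  have "y - ?p \<in> span U"
    using assms(1) orthogonal_projection(1) span_diff by blast
  then have "orthogonal (x - y) (y - ?p)" and "orthogonal (x - ?p) (y - ?p)"
    using orth orthogonal_projection(2) by blast+
  then have "orthogonal ((x - ?p) - (x - y)) (y - ?p)"
    by (simp add: orthogonal_def inner_diff_left)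
  then show ?thesis
    by (simp add: orthogonal_self)
qed

lemma orthogonal_projection_add_orthogonal:
  assumes "y \<in> span U" and "\<And>w. w \<in> span U \<Longrightarrow> orthogonal z w"
  shows "orthogonal_projection U (y + z) = y"
  using assms by (intro orthogonal_projection_unique) simp_all

lemma linear_orthogonal_projection:
  fixes U :: "'a::euclidean_space set"
  shows "linear (orthogonal_projection U)"
proof (rule linearI)
  fix x y
  let ?p = "orthogonal_projection U"
  show "?p (x + y) = ?p x + ?p y"
  proof (rule orthogonal_projection_unique)
    show "?p x + ?p y \<in> span U"
      by (intro span_add orthogonal_projection(1))
    fix w assume "w \<in> span U"
    then have "orthogonal (x - ?p x) w" and "orthogonal (y - ?p y) w"
      by (rule orthogonal_projection(2))+
    then show "orthogonal (x + y - (?p x + ?p y)) w"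
      by (simp add: orthogonal_def inner_diff_left inner_add_left)
  qed
next
  fix c :: real and x
  let ?p = "orthogonal_projection U"
  show "?p (c *\<^sub>R x) = c *\<^sub>R ?p x"
  proof (rule orthogonal_projection_unique)
    show "c *\<^sub>R ?p x \<in> span U"
      by (intro span_mul orthogonal_projection(1))
    fix w assume "w \<in> span U"
    then have "orthogonal (x - ?p x) w"
      by (rule orthogonal_projection(2))
    then show "orthogonal (c *\<^sub>R x - c *\<^sub>R ?p x) w"
      by (simp add: orthogonal_def inner_diff_left)
  qed
qed

lemma continuous_on_orthogonal_projection: "continuous_on A (orthogonal_projection U)"
  using linear_orthogonal_projection linear_continuous_on linear_linear by blast

lemma aeval_orthogonal_projection:
  assumes "grad a \<in> span U"
  shows "aeval a (orthogonal_projection U x) = aeval a x"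
proof -
  have "orthogonal (x - orthogonal_projection U x) (fst a)"
    using orthogonal_projection(2) assms by (simp add: grad_def)
  then show ?thesis
    by (simp add: aeval_def orthogonal_def inner_diff_right inner_commute)
qed

lemma chamberD:
  assumes "chamber W S C"
  shows "connected C" "C \<subseteq> hyp_complement W S" "C \<noteq> {}"
proof -
  obtain x where x: "x \<in> hyp_complement W S"
    and C: "C = connected_component_set (hyp_complement W S) x"
    using assms unfolding chamber_def by blast
  then have "x \<in> C"
    by simp
  with C show "connected C" "C \<subseteq> hyp_complement W S" "C \<noteq> {}"
    using connected_component_subset by blast+
qed

lemma aeval_pos_connected:
  assumes "connected K" and nz: "\<And>z. z \<in> K \<Longrightarrow> aeval a z \<noteq> 0"
    and "x \<in> K" "aeval a x > 0" "y \<in> K"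
  shows "aeval a y > 0"
proof (rule ccontr)
  assume "\<not> aeval a y > 0"
  then obtain z where "z \<in> K" "fst a \<bullet> z = - snd a"
    using connected_ivt_hyperplane[OF \<open>connected K\<close> \<open>y \<in> K\<close> \<open>x \<in> K\<close>, of "fst a" "- snd a"] assms
    by (auto simp: aeval_def)
  then show False
    using nz[of z] by (simp add: aeval_def)
qed

lemma chamber_orthogonal_projection:
  assumes "chamber UNIV S C" and "S' \<subseteq> S" and "\<forall>a\<in>S'. grad a \<in> span U"
  obtains C' where "chamber (span U) S' C'" and "orthogonal_projection U ` C \<subseteq> C'"
proof -
  let ?P = "orthogonal_projection U" and ?H = "hyp_complement (span U) S'"
  have "?P ` C \<subseteq> ?H"
    using chamberD(2)[OF assms(1)] assms(2,3) orthogonal_projection(1)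
    by (fastforce simp: hyp_complement_def ahyp_def aeval_orthogonal_projection)
  moreover obtain x where "x \<in> C"
    using chamberD(3)[OF assms(1)] by blast
  moreover have "connected (?P ` C)"
    using chamberD(1)[OF assms(1)] connected_continuous_image continuous_on_orthogonal_projection
    by blast
  ultimately have "?P ` C \<subseteq> connected_component_set ?H (?P x)"
    by (intro connected_component_maximal) auto
  moreover have "chamber (span U) S' (connected_component_set ?H (?P x))"
    using \<open>?P ` C \<subseteq> ?H\<close> \<open>x \<in> C\<close> unfolding chamber_def by blast
  ultimately show thesis
    using that by blast
qed

lemma is_wall_orthogonal_projection:
  assumes "grad a \<in> span U" and wall: "is_wall (ahyp UNIV a) C"
    and closure: "orthogonal_projection U ` closure C \<subseteq> closure C'"
    and "ahyp (span U) a \<inter> C' = {}"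
  shows "is_wall (ahyp (span U) a) C'"
proof -
  let ?P = "orthogonal_projection U"
  obtain x e where x: "x \<in> ahyp UNIV a" and "e > 0"
    and ball: "ball x e \<inter> ahyp UNIV a \<subseteq> closure C"
    using wall unfolding is_wall_def by blast
  have "?P x \<in> ahyp (span U) a"
    using x assms(1) orthogonal_projection(1) by (simp add: ahyp_def aeval_orthogonal_projection)
  moreover have "ball (?P x) e \<inter> ahyp (span U) a \<subseteq> closure C'"
  proof
    fix y assume y: "y \<in> ball (?P x) e \<inter> ahyp (span U) a"
    define z where "z = y + (x - ?P x)"
    have Pz: "?P z = y"
      using y orthogonal_projection(2) unfolding z_def
      by (intro orthogonal_projection_add_orthogonal) (auto simp: ahyp_def)
    have "aeval a z = 0"
      using y Pz aeval_orthogonal_projection[OF assms(1), of z] by (simp add: ahyp_def)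
    moreover have "dist x z < e"
      using y by (simp add: z_def dist_norm)
    ultimately have "z \<in> closure C"
      using ball by (auto simp: ahyp_def)
    then show "y \<in> closure C'"
      using closure Pz by blast
  qed
  ultimately show ?thesis
    using assms(4) \<open>e > 0\<close> unfolding is_wall_def by blast
qed

lemma chamber_basis_orthogonal_projection:
  assumes C: "chamber UNIV S C" and "S' \<subseteq> S" and grad: "\<forall>a\<in>S'. grad a \<in> span U"
    and C': "chamber (span U) S' C'" and PC: "orthogonal_projection U ` C \<subseteq> C'"
  shows "chamber_basis UNIV S C \<inter> S' \<subseteq> chamber_basis (span U) S' C'"
proof
  fix a assume a: "a \<in> chamber_basis UNIV S C \<inter> S'"
  let ?P = "orthogonal_projection U"
  have nz: "aeval a y \<noteq> 0" if "y \<in> C'" for y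
    using that chamberD(2)[OF C'] a by (auto simp: hyp_complement_def ahyp_def)
  obtain x where "x \<in> C"
    using chamberD(3)[OF C] by blast
  have "aeval a (?P x) > 0"
    using a \<open>x \<in> C\<close> grad by (simp add: chamber_basis_def aeval_orthogonal_projection)
  then have "\<forall>y\<in>C'. aeval a y > 0"
    using aeval_pos_connected[OF chamberD(1)[OF C'] nz] PC \<open>x \<in> C\<close> by blast
  moreover have "?P ` closure C \<subseteq> closure C'"
    using PC closure_subset
    by (intro image_closure_subset[OF continuous_on_orthogonal_projection]) auto
  then have "is_wall (ahyp (span U) a) C'"
    using a grad nz
    by (intro is_wall_orthogonal_projection) (auto simp: chamber_basis_def ahyp_def)
  ultimately show "a \<in> chamber_basis (span U) S' C'"
    using a \<open>S' \<subseteq> S\<close> by (auto simp: chamber_basis_def)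
qed

theorem lemmaA1:
  fixes S :: "('a::euclidean_space \<times> real) set"
    and C :: "'a set"
    and J :: "('a \<times> real) set"
  assumes "affine_root_system UNIV S"
    and "chamber UNIV S C"
    and "J \<subseteq> chamber_basis UNIV S C"
    and "independent (grad ` J)"
  shows "\<exists>BJ. is_basis_ars (EJ J) (PhiJ S J) BJ \<and> J \<subseteq> BJ"
proof -
  have sub: "PhiJ S J \<subseteq> S" and grad: "\<forall>a\<in>PhiJ S J. grad a \<in> span (grad ` J)"
    by (auto simp: PhiJ_def)
  obtain C' where C': "chamber (EJ J) (PhiJ S J) C'"
    and PC: "orthogonal_projection (grad ` J) ` C \<subseteq> C'"
    using chamber_orthogonal_projection[OF assms(2) sub grad] unfolding EJ_def by blast
  have "J \<subseteq> chamber_basis UNIV S C \<inter> PhiJ S J"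
    using assms(3) by (auto simp: PhiJ_def chamber_basis_def span_base)
  also have "\<dots> \<subseteq> chamber_basis (EJ J) (PhiJ S J) C'"
    using chamber_basis_orthogonal_projection[OF assms(2) sub grad _ PC] C'
    unfolding EJ_def by blast
  finally show ?thesis
    using C' unfolding is_basis_ars_def by blast
qed

end
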